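(* Consider the discrete-time system $x_{k+1}=(I-\varepsilon\Delta)x_k+\varepsilon\pi A\psi(x_k)$, with $\varepsilon>0$, $\pi>0$, and each $\psi_i$ satisfying (A1)–(A4). If $x^*\neq0$ is an equilibrium point of this system, then $\pi>\pi_1=\frac{1}{1-\lambda_1(\mathcal L)}$.
   Context: Let $\mathcal G$ be an undirected, connected signed graph on $n$ nodes without self-loops, with symmetric adjacency matrix $A=[a_{ij}]$ having zero diagonal and entries of either sign. Let $\delta_i=\sum_j|a_{ij}|>0$, $\Delta=\mathrm{diag}(\delta_i)$, and $\mathcal L=I-\Delta^{-1}A$, with real eigenvalues $\lambda_1(\mathcal L)\le\dots\le\lambda_n(\mathcal L)$. Each $\psi_i:\mathbb R\to\mathbb R$ is smooth and satisfies: (A1) $\psi_i$ is odd; (A2) $\psi_i'>0$ everywhere and $\psi_i'(0)=1$; (A3) $\lim_{s\to\pm\infty}\psi_i(s)=\pm1$; (A4) $\psi_i$ is strictly convex for $s<0$ and strictly concave for $s>0$. Here $\psi(x)=(\psi_1(x_1),\dots,\psi_n(x_n))^T$. *)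

theory Defs
  imports "HOL-Analysis.Analysis"
begin

definition strictly_convex_on :: "real set \<Rightarrow> (real \<Rightarrow> real) \<Rightarrow> bool" where
  "strictly_convex_on S f \<longleftrightarrow>
     (\<forall>x\<in>S. \<forall>y\<in>S. \<forall>t. x \<noteq> y \<and> 0 < t \<and> t < 1 \<longrightarrow>
        f ((1 - t) * x + t * y) < (1 - t) * f x + t * f y)"

definition strictly_concave_on :: "real set \<Rightarrow> (real \<Rightarrow> real) \<Rightarrow> bool" where
  "strictly_concave_on S f \<longleftrightarrow> strictly_convex_on S (\<lambda>x. - f x)"

definition smooth_fun :: "(real \<Rightarrow> real) \<Rightarrow> bool" where
  "smooth_fun f \<longleftrightarrow> (\<forall>k. \<forall>x. ((deriv ^^ k) f) differentiable (at x))"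

definition is_eigenvalue :: "real^'n^'n \<Rightarrow> real \<Rightarrow> bool" where
  "is_eigenvalue M \<mu> \<longleftrightarrow> (\<exists>v. v \<noteq> 0 \<and> M *v v = \<mu> *\<^sub>R v)"

definition lambda_min :: "real^'n^'n \<Rightarrow> real" where
  "lambda_min M = Min {\<mu>. is_eigenvalue M \<mu>}"

definition degree_mat :: "real^'n^'n \<Rightarrow> real^'n^'n" where
  "degree_mat A = (\<chi> i j. if i = j then (\<Sum>k\<in>UNIV. \<bar>A $ i $ k\<bar>) else 0)"

definition norm_laplacian :: "real^'n^'n \<Rightarrow> real^'n^'n" where
  "norm_laplacian A = (\<chi> i j. (if i = j then 1 else 0) - A $ i $ j / (\<Sum>k\<in>UNIV. \<bar>A $ i $ k\<bar>))"

definition graph_connected :: "real^'n^'n \<Rightarrow> bool" where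
  "graph_connected A \<longleftrightarrow> (\<forall>i j. (i, j) \<in> {(p, q). A $ p $ q \<noteq> 0}\<^sup>*)"

end

theory Submission
  imports Defs
begin

text \<open>At an equilibrium, \<open>\<Delta> x = \<pi> A p\<close> with \<open>p = \<psi>(x)\<close>. Since each \<open>\<psi>\<^sub>i\<close> is odd,
increasing, concave on \<open>(0,\<infinity>)\<close> and has slope 1 at 0, it satisfies
\<open>\<psi>\<^sub>i(s)\<^sup>2 < s \<psi>\<^sub>i(s)\<close> for \<open>s \<noteq> 0\<close>, whence \<open>p\<^sup>T\<Delta>p < p\<^sup>T\<Delta>x = \<pi> p\<^sup>TAp\<close>.
The generalized Rayleigh quotient \<open>y\<^sup>TAy / y\<^sup>T\<Delta>y\<close> is bounded by its maximum \<open>R\<close>, which is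
attained at a vector with \<open>Ay = R \<Delta>y\<close>, i.e. at an eigenvector of \<open>\<L>\<close> for \<open>1 - R\<close>.
Hence \<open>\<pi> R > 1\<close> and \<open>\<lambda>\<^sub>1(\<L>) \<le> 1 - R\<close>, so \<open>\<pi> > 1/R \<ge> 1/(1 - \<lambda>\<^sub>1(\<L>))\<close>.\<close>

lemma strictly_concave_onD:
  assumes "strictly_concave_on S f" "x \<in> S" "y \<in> S" "x \<noteq> y" "0 < t" "t < 1"
  shows "(1 - t) * f x + t * f y < f ((1 - t) * x + t * y)"
  using assms unfolding strictly_concave_on_def strictly_convex_on_def by fastforce

lemma strictly_concave_on_secant_origin:
  fixes f :: "real \<Rightarrow> real"
  assumes conc: "strictly_concave_on {0<..} f" and cont: "isCont f 0" and f0: "f 0 = 0"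
    and t: "0 < t" "t < u"
  shows "t / u * f u \<le> f t"
proof -
  define h where "h a = (u - t) / (u - a) * f a + (t - a) / (u - a) * f u" for a
  have "isCont h 0"
    unfolding h_def using t cont by (intro continuous_intros) auto
  then have lim: "(h \<longlongrightarrow> h 0) (at_right 0)"
    by (simp add: isCont_def filterlim_at_split)
  have "eventually (\<lambda>a. h a \<le> f t) (at_right 0)"
  proof (rule eventually_at_rightI[of 0 t])
    fix a assume a: "a \<in> {0<..<t}"
    define l where "l = (t - a) / (u - a)"
    have l: "0 < l" "l < 1" "1 - l = (u - t) / (u - a)"
      using a t by (auto simp: l_def field_simps)
    have "u - a \<noteq> 0" using a t by simp
    then have "(1 - l) * a + l * u = t"
      unfolding l_def by (simp add: divide_simps) (simp add: algebra_simps)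
    moreover have "(1 - l) * f a + l * f u < f ((1 - l) * a + l * u)"
      using strictly_concave_onD[OF conc, of a u l] a t l by simp
    ultimately have "(1 - l) * f a + l * f u < f t" by simp
    moreover have "h a = (1 - l) * f a + l * f u"
      using l(3) by (simp add: h_def l_def)
    ultimately show "h a \<le> f t" by simp
  qed (use t in auto)
  then have "h 0 \<le> f t"
    using tendsto_le[OF _ tendsto_const lim] by simp
  then show ?thesis using t f0 by (simp add: h_def)
qed

lemma strictly_concave_on_lt_self:
  fixes f :: "real \<Rightarrow> real"
  assumes conc: "strictly_concave_on {0<..} f"
    and der: "(f has_real_derivative 1) (at 0)" and f0: "f 0 = 0"
    and s: "0 < s"
  shows "f s < s"
proof -
  have cont: "isCont f 0" using der by (rule DERIV_isCont)
  have le: "f u \<le> u" if u: "0 < u" for u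
  proof -
    have lim: "((\<lambda>t. f t / t) \<longlongrightarrow> 1) (at_right 0)"
      using der f0 by (simp add: DERIV_def filterlim_at_split)
    have ev: "eventually (\<lambda>t. f u / u \<le> f t / t) (at_right 0)"
    proof (rule eventually_at_rightI[of 0 u])
      fix t assume "t \<in> {0<..<u}"
      then show "f u / u \<le> f t / t"
        using strictly_concave_on_secant_origin[OF conc cont f0, of t u]
        by (simp add: field_simps)
    qed (use u in auto)
    have "f u / u \<le> 1"
      using tendsto_le[OF _ lim tendsto_const ev] by simp
    then show ?thesis using u by (simp add: field_simps)
  qed
  text \<open>Strictness comes from writing s/2 as a proper convex combination of s/4 and s.\<close>
  have "(1 - 1/3) * f (s/4) + (1/3) * f s < f ((1 - 1/3) * (s/4) + (1/3) * s)"
    using strictly_concave_onD[OF conc, of "s/4" s "1/3"] s by simp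
  moreover have "s / 4 / s * f s \<le> f (s/4)"
    using strictly_concave_on_secant_origin[OF conc cont f0, of "s/4" s] s by simp
  moreover have "f (s/2) \<le> s/2" using le[of "s/2"] s by simp
  ultimately show ?thesis using s by (simp add: field_simps)
qed

lemma odd_increasing_concave_sq_lt:
  fixes f :: "real \<Rightarrow> real"
  assumes odd: "\<And>s. f (- s) = - f s"
    and diff: "\<And>x. f differentiable (at x)"
    and dpos: "\<And>x. deriv f x > 0" and d0: "deriv f 0 = 1"
    and conc: "strictly_concave_on {0<..} f"
    and s: "s \<noteq> 0"
  shows "(f s)^2 < s * f s"
proof -
  have der: "(f has_real_derivative deriv f x) (at x)" for x
    using diff by (simp add: DERIV_deriv_iff_real_differentiable)
  have f0: "f 0 = 0" using odd[of 0] by simp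
  have pos: "0 < f t \<and> f t < t" if "0 < t" for t
  proof
    show "0 < f t" using DERIV_pos_imp_increasing[of 0 t f] that der dpos f0 by metis
    show "f t < t" using strictly_concave_on_lt_self[OF conc _ f0 that] der[of 0] d0 by simp
  qed
  show ?thesis
  proof (cases "s > 0")
    case True
    then show ?thesis using pos[OF True] by (simp add: power2_eq_square)
  next
    case False
    then have "0 < - s" using s by simp
    from pos[OF this] show ?thesis using odd[of s] by (simp add: power2_eq_square)
  qed
qed

lemma inner_matrix_vector_mult_commute:
  fixes M :: "real^'n^'n"
  assumes "\<And>i j. M $ i $ j = M $ j $ i"
  shows "x \<bullet> (M *v y) = y \<bullet> (M *v x)"
proof -
  have "x \<bullet> (M *v y) = (\<Sum>i\<in>UNIV. \<Sum>j\<in>UNIV. x $ i * M $ i $ j * y $ j)"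
    by (simp add: inner_vec_def matrix_vector_mult_def sum_distrib_left mult.assoc)
  also have "\<dots> = (\<Sum>j\<in>UNIV. \<Sum>i\<in>UNIV. x $ i * M $ i $ j * y $ j)"
    by (rule sum.swap)
  also have "\<dots> = y \<bullet> (M *v x)"
    by (simp add: inner_vec_def matrix_vector_mult_def sum_distrib_left assms
        mult.commute mult.left_commute)
  finally show ?thesis .
qed

lemma eigenvector_combination_eq_0:
  fixes M :: "real^'n^'n"
  assumes "finite T" and eig: "\<And>\<mu>. \<mu> \<in> T \<Longrightarrow> M *v e \<mu> = \<mu> *\<^sub>R e \<mu>"
    and "(\<Sum>\<mu>\<in>T. c \<mu> *\<^sub>R e \<mu>) = 0" and "\<mu> \<in> T"
  shows "c \<mu> *\<^sub>R e \<mu> = 0"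
  using assms
proof (induction T arbitrary: c \<mu> rule: finite_induct)
  case empty
  then show ?case by simp
next
  case (insert \<nu> T)
  let ?d = "\<lambda>\<mu>. c \<mu> * (\<mu> - \<nu>)"
  have "M *v (\<Sum>\<mu>\<in>insert \<nu> T. c \<mu> *\<^sub>R e \<mu>) - \<nu> *\<^sub>R (\<Sum>\<mu>\<in>insert \<nu> T. c \<mu> *\<^sub>R e \<mu>)
      = (\<Sum>\<mu>\<in>insert \<nu> T. ?d \<mu> *\<^sub>R e \<mu>)"
    using insert.prems(1)
    by (simp add: linear_sum[OF matrix_vector_mul_linear] matrix_vector_mult_scaleR
        scaleR_sum_right sum_subtractf[symmetric] algebra_simps)
  then have "(\<Sum>\<mu>\<in>T. ?d \<mu> *\<^sub>R e \<mu>) = 0"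
    using insert.hyps insert.prems(2) by simp
  then have "?d \<mu> *\<^sub>R e \<mu> = 0" if "\<mu> \<in> T" for \<mu>
    using insert.IH[of ?d] insert.prems(1) that by blast
  then have T0: "c \<mu> *\<^sub>R e \<mu> = 0" if "\<mu> \<in> T" for \<mu>
    using that insert.hyps(2) by fastforce
  then have "(\<Sum>\<mu>\<in>T. c \<mu> *\<^sub>R e \<mu>) = 0"
    by (intro sum.neutral) blast
  then have "c \<nu> *\<^sub>R e \<nu> = 0"
    using insert.hyps insert.prems(2) by simp
  then show ?case using T0 insert.prems(3) by blast
qed

lemma finite_eigenvalues:
  fixes M :: "real^'n^'n"
  shows "finite {\<mu>. is_eigenvalue M \<mu>}"
proof (rule ccontr)
  assume "infinite {\<mu>. is_eigenvalue M \<mu>}"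
  then obtain T where T: "T \<subseteq> {\<mu>. is_eigenvalue M \<mu>}" "finite T" "card T = Suc CARD('n)"
    using infinite_arbitrarily_large by blast
  have "\<forall>\<mu>\<in>T. \<exists>v. v \<noteq> 0 \<and> M *v v = \<mu> *\<^sub>R v"
    using T(1) by (auto simp: is_eigenvalue_def)
  then obtain e where "\<forall>\<mu>\<in>T. e \<mu> \<noteq> 0 \<and> M *v e \<mu> = \<mu> *\<^sub>R e \<mu>"
    by (auto dest: bchoice)
  then have e: "\<And>\<mu>. \<mu> \<in> T \<Longrightarrow> e \<mu> \<noteq> 0 \<and> M *v e \<mu> = \<mu> *\<^sub>R e \<mu>" by blast
  have inj: "inj_on e T"
  proof (rule inj_onI)
    fix \<mu> \<nu> assume \<mu>: "\<mu> \<in> T" and \<nu>: "\<nu> \<in> T" and "e \<mu> = e \<nu>"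
    then have "\<mu> *\<^sub>R e \<mu> = \<nu> *\<^sub>R e \<mu>"
      using e[OF \<mu>] e[OF \<nu>] by metis
    then show "\<mu> = \<nu>" using e[OF \<mu>] by simp
  qed
  have eig: "\<And>\<mu>. \<mu> \<in> T \<Longrightarrow> M *v e \<mu> = \<mu> *\<^sub>R e \<mu>" using e by blast
  have "independent (e ` T)"
  proof
    assume "dependent (e ` T)"
    then obtain u v where v: "v \<in> e ` T" "u v \<noteq> 0" and sum: "(\<Sum>w\<in>e ` T. u w *\<^sub>R w) = 0"
      using dependent_finite[OF finite_imageI[OF T(2)]] by blast
    then obtain \<mu> where \<mu>: "\<mu> \<in> T" "v = e \<mu>" by blast
    have "(\<Sum>\<nu>\<in>T. u (e \<nu>) *\<^sub>R e \<nu>) = 0" using sum by (simp add: sum.reindex[OF inj])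
    then have "u (e \<mu>) *\<^sub>R e \<mu> = 0"
      using eigenvector_combination_eq_0[OF T(2), of M e "\<lambda>\<nu>. u (e \<nu>)"] eig \<mu>(1) by blast
    then show False using v \<mu> e[OF \<mu>(1)] by simp
  qed
  then have "card (e ` T) \<le> CARD('n)"
    using independent_bound by fastforce
  then show False using T(3) card_image[OF inj] by simp
qed

lemma psd_form_eq_0_imp_kernel:
  fixes M :: "real^'n^'n"
  assumes sym: "\<And>i j. M $ i $ j = M $ j $ i"
    and psd: "\<And>y. 0 \<le> y \<bullet> (M *v y)"
    and x: "x \<bullet> (M *v x) = 0"
  shows "M *v x = 0"
proof (rule ccontr)
  define g where "g = M *v x"
  assume "M *v x \<noteq> 0"
  define a where "a = g \<bullet> g"
  have a: "0 < a" using \<open>M *v x \<noteq> 0\<close> by (simp add: a_def g_def)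
  define b where "b = g \<bullet> (M *v g)"
  have b: "0 \<le> b" using psd by (simp add: b_def)
  have expand: "(x + t *\<^sub>R g) \<bullet> (M *v (x + t *\<^sub>R g)) = 2 * t * a + t\<^sup>2 * b" for t
    using x inner_matrix_vector_mult_commute[OF sym, of x g]
    by (simp add: matrix_vector_right_distrib matrix_vector_mult_scaleR inner_add_left
        inner_add_right a_def g_def b_def algebra_simps power2_eq_square)
  define t where "t = - a / (b + 1)"
  have "t < 0" using a b by (simp add: t_def)
  moreover have "0 < 2 * a + t * b"
  proof -
    have "0 \<le> a * b" "0 < 1 + b" using a b by simp_all
    then show ?thesis using a by (simp add: t_def field_simps)
  qed
  ultimately have "t * (2 * a + t * b) < 0"
    by (simp add: mult_neg_pos)
  then have "2 * t * a + t\<^sup>2 * b < 0"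
    by (simp add: power2_eq_square algebra_simps)
  then show False using psd[of "x + t *\<^sub>R g"] expand[of t] by simp
qed

lemma generalized_rayleigh_maximizer:
  fixes A D :: "real^'n^'n"
  assumes symA: "\<And>i j. A $ i $ j = A $ j $ i" and symD: "\<And>i j. D $ i $ j = D $ j $ i"
    and posD: "\<And>y. y \<noteq> 0 \<Longrightarrow> 0 < y \<bullet> (D *v y)"
  obtains R y0 where "y0 \<noteq> 0" "A *v y0 = R *\<^sub>R (D *v y0)"
    and "\<And>y. y \<bullet> (A *v y) \<le> R * (y \<bullet> (D *v y))"
proof -
  define f where "f y = (y \<bullet> (A *v y)) / (y \<bullet> (D *v y))" for y
  have cont: "continuous_on (sphere 0 1) f"
    unfolding f_def
  proof (intro continuous_intros ballI)
    fix y :: "real^'n" assume "y \<in> sphere 0 1"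
    then show "y \<bullet> (D *v y) \<noteq> 0" using posD[of y] by fastforce
  qed
  have "sphere (0::real^'n) 1 \<noteq> {}" by simp
  then obtain y0 where y0: "y0 \<in> sphere 0 1" "\<And>y. y \<in> sphere 0 1 \<Longrightarrow> f y \<le> f y0"
    using continuous_attains_sup[OF compact_sphere _ cont] by blast
  define R where "R = f y0"
  have "y0 \<noteq> 0" using y0(1) by auto
  have bound: "y \<bullet> (A *v y) \<le> R * (y \<bullet> (D *v y))" for y
  proof (cases "y = 0")
    case False
    have "f y = f ((1 / norm y) *\<^sub>R y)"
      using False by (simp add: f_def matrix_vector_mult_scaleR)
    also have "\<dots> \<le> R" unfolding R_def using False by (intro y0(2)) simp
    finally show ?thesis using posD[OF False] by (simp add: f_def divide_le_eq)
  qed simp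
  define G where "G = R *\<^sub>R D - A"
  have Gv: "G *v y = R *\<^sub>R (D *v y) - A *v y" for y
    by (simp add: G_def matrix_vector_mult_diff_rdistrib scaleR_matrix_vector_assoc[symmetric])
  have "G *v y0 = 0"
  proof (rule psd_form_eq_0_imp_kernel)
    show "G $ i $ j = G $ j $ i" for i j by (simp add: G_def symA symD)
    show "0 \<le> y \<bullet> (G *v y)" for y using bound[of y] by (simp add: Gv inner_diff_right)
    show "y0 \<bullet> (G *v y0) = 0"
      using posD[OF \<open>y0 \<noteq> 0\<close>] by (simp add: Gv inner_diff_right R_def f_def)
  qed
  then have "A *v y0 = R *\<^sub>R (D *v y0)" by (simp add: Gv)
  with \<open>y0 \<noteq> 0\<close> bound show ?thesis using that by blast
qed

lemma degree_mat_vec: "(degree_mat A *v v) $ i = (\<Sum>k\<in>UNIV. \<bar>A $ i $ k\<bar>) * v $ i"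
proof -
  have "(\<Sum>j\<in>UNIV. (if i = j then (\<Sum>k\<in>UNIV. \<bar>A $ i $ k\<bar>) else 0) * v $ j)
      = (\<Sum>j\<in>UNIV. if i = j then (\<Sum>k\<in>UNIV. \<bar>A $ i $ k\<bar>) * v $ j else 0)"
    by (rule sum.cong) auto
  then show ?thesis by (simp add: degree_mat_def matrix_vector_mult_def)
qed

lemma inner_degree_mat_vec:
  "x \<bullet> (degree_mat A *v y) = (\<Sum>i\<in>UNIV. (\<Sum>k\<in>UNIV. \<bar>A $ i $ k\<bar>) * (x $ i * y $ i))"
  by (simp add: inner_vec_def degree_mat_vec ac_simps)

lemma degree_mat_form_pos:
  assumes "\<And>i. 0 < (\<Sum>j\<in>UNIV. \<bar>A $ i $ j\<bar>)" and "y \<noteq> 0"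
  shows "0 < y \<bullet> (degree_mat A *v y)"
proof -
  obtain i where "y $ i \<noteq> 0" using assms(2) by (auto simp: vec_eq_iff)
  then show ?thesis
    unfolding inner_degree_mat_vec using assms(1)
    by (intro sum_pos2[of UNIV i]) (auto intro: mult_nonneg_nonneg less_imp_le simp: zero_less_mult_iff)
qed

lemma norm_laplacian_vec:
  "(norm_laplacian A *v v) $ i = v $ i - (A *v v) $ i / (\<Sum>k\<in>UNIV. \<bar>A $ i $ k\<bar>)"
proof -
  have "(\<Sum>j\<in>UNIV. ((if i = j then 1 else 0) - A $ i $ j / (\<Sum>k\<in>UNIV. \<bar>A $ i $ k\<bar>)) * v $ j)
      = (\<Sum>j\<in>UNIV. (if i = j then v $ j else 0) - A $ i $ j * v $ j / (\<Sum>k\<in>UNIV. \<bar>A $ i $ k\<bar>))"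
    by (rule sum.cong) (auto simp: left_diff_distrib)
  then show ?thesis
    by (simp add: norm_laplacian_def matrix_vector_mult_def sum_subtractf sum_divide_distrib)
qed

lemma norm_laplacian_eigen_iff:
  assumes "\<And>i. 0 < (\<Sum>j\<in>UNIV. \<bar>A $ i $ j\<bar>)"
  shows "norm_laplacian A *v v = \<mu> *\<^sub>R v \<longleftrightarrow> A *v v = (1 - \<mu>) *\<^sub>R (degree_mat A *v v)"
proof -
  have "(norm_laplacian A *v v) $ i = \<mu> * v $ i \<longleftrightarrow> (A *v v) $ i = (1 - \<mu>) * (degree_mat A *v v) $ i"
    for i
    using assms[of i] by (simp add: norm_laplacian_vec degree_mat_vec field_simps) (auto simp: algebra_simps)
  then show ?thesis by (simp add: vec_eq_iff)
qed

lemma lambda_min_norm_laplacian_le: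
  fixes A :: "real^'n^'n"
  assumes sym: "\<And>i j. A $ i $ j = A $ j $ i"
    and deg_pos: "\<And>i. 0 < (\<Sum>j\<in>UNIV. \<bar>A $ i $ j\<bar>)"
  obtains R where "\<And>y. y \<bullet> (A *v y) \<le> R * (y \<bullet> (degree_mat A *v y))"
    and "lambda_min (norm_laplacian A) \<le> 1 - R"
proof -
  have "degree_mat A $ i $ j = degree_mat A $ j $ i" for i j
    by (simp add: degree_mat_def)
  then obtain R y0 where "y0 \<noteq> 0" "A *v y0 = R *\<^sub>R (degree_mat A *v y0)"
    and bound: "\<And>y. y \<bullet> (A *v y) \<le> R * (y \<bullet> (degree_mat A *v y))"
    using generalized_rayleigh_maximizer[OF sym _ degree_mat_form_pos[OF deg_pos]] by blast
  then have "is_eigenvalue (norm_laplacian A) (1 - R)"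
    unfolding is_eigenvalue_def norm_laplacian_eigen_iff[OF deg_pos] by auto
  then have "lambda_min (norm_laplacian A) \<le> 1 - R"
    unfolding lambda_min_def by (simp add: finite_eigenvalues)
  with bound show ?thesis using that by blast
qed

lemma degree_form_image_lt:
  fixes A :: "real^'n^'n" and \<phi> :: "'n \<Rightarrow> real \<Rightarrow> real"
  assumes deg_pos: "\<And>i. 0 < (\<Sum>j\<in>UNIV. \<bar>A $ i $ j\<bar>)"
    and sq_lt: "\<And>i s. s \<noteq> 0 \<Longrightarrow> (\<phi> i s)\<^sup>2 < s * \<phi> i s"
    and zero: "\<And>i. \<phi> i 0 = 0"
    and "x \<noteq> 0"
  defines "p \<equiv> \<chi> i. \<phi> i (x $ i)"
  shows "p \<bullet> (degree_mat A *v p) < p \<bullet> (degree_mat A *v x)"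
proof -
  let ?d = "\<lambda>i. \<Sum>k\<in>UNIV. \<bar>A $ i $ k\<bar>"
  obtain i0 where i0: "x $ i0 \<noteq> 0" using \<open>x \<noteq> 0\<close> by (auto simp: vec_eq_iff)
  have "\<phi> i (x $ i) * \<phi> i (x $ i) \<le> \<phi> i (x $ i) * x $ i" for i
    using sq_lt[of "x $ i" i] zero[of i] by (cases "x $ i = 0") (auto simp: power2_eq_square mult.commute)
  then have "?d i * (\<phi> i (x $ i) * \<phi> i (x $ i)) \<le> ?d i * (\<phi> i (x $ i) * x $ i)" for i
    using deg_pos[of i] by (simp add: mult_left_mono)
  moreover have "?d i0 * (\<phi> i0 (x $ i0) * \<phi> i0 (x $ i0)) < ?d i0 * (\<phi> i0 (x $ i0) * x $ i0)"
    using sq_lt[OF i0, of i0] deg_pos[of i0] by (simp add: power2_eq_square mult.commute)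
  ultimately show ?thesis
    unfolding inner_degree_mat_vec p_def by (intro sum_strict_mono_ex1) auto
qed

lemma euler_step_fixed_point:
  fixes A D :: "real^'n^'n"
  assumes "x = (mat 1 - \<epsilon> *\<^sub>R D) *v x + (\<epsilon> * \<pi>) *\<^sub>R (A *v q)" and "\<epsilon> \<noteq> 0"
  shows "D *v x = \<pi> *\<^sub>R (A *v q)"
proof -
  have "\<epsilon> *\<^sub>R (D *v x - \<pi> *\<^sub>R (A *v q)) = 0"
    using assms(1)
    by (simp add: matrix_vector_mult_diff_rdistrib scaleR_matrix_vector_assoc[symmetric] algebra_simps)
  then show ?thesis using assms(2) by simp
qed

lemma one_div_lt_of_one_lt_mult:
  fixes \<pi> R l :: real
  assumes "1 < \<pi> * R" and "0 < \<pi>" and "l \<le> 1 - R"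
  shows "1 / (1 - l) < \<pi>"
proof -
  have "0 < R"
  proof (rule ccontr)
    assume "\<not> 0 < R"
    then have "\<pi> * R \<le> 0" using assms(2) by (simp add: mult_nonneg_nonpos)
    then show False using assms(1) by simp
  qed
  have "1 / (1 - l) \<le> 1 / R"
    using assms(3) \<open>0 < R\<close> by (intro divide_left_mono) auto
  also have "1 / R < \<pi>" using assms(1) \<open>0 < R\<close> by (simp add: divide_less_eq mult.commute)
  finally show ?thesis .
qed

theorem lemma3:
  fixes A :: "real^'n^'n"
    and \<psi> :: "'n \<Rightarrow> real \<Rightarrow> real"
    and \<epsilon> \<pi> :: real
    and xs :: "real^'n"
  assumes sym: "\<And>i j. A $ i $ j = A $ j $ i"
    and diag0: "\<And>i. A $ i $ i = 0"
    and conn: "graph_connected A"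
    and deg_pos: "\<And>i. (\<Sum>j\<in>UNIV. \<bar>A $ i $ j\<bar>) > 0"
    and smooth: "\<And>i. smooth_fun (\<psi> i)"
    and A1: "\<And>i s. \<psi> i (- s) = - \<psi> i s"
    and A2: "\<And>i s. deriv (\<psi> i) s > 0" "\<And>i. deriv (\<psi> i) 0 = 1"
    and A3: "\<And>i. (\<psi> i \<longlongrightarrow> 1) at_top" "\<And>i. (\<psi> i \<longlongrightarrow> -1) at_bot"
    and A4: "\<And>i. strictly_convex_on {..<0} (\<psi> i)" "\<And>i. strictly_concave_on {0<..} (\<psi> i)"
    and eps: "\<epsilon> > 0"
    and pi: "\<pi> > 0"
    and equil: "xs = (mat 1 - \<epsilon> *\<^sub>R degree_mat A) *v xs + (\<epsilon> * \<pi>) *\<^sub>R (A *v (\<chi> i. \<psi> i (xs $ i)))"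
    and nz: "xs \<noteq> 0"
  shows "\<pi> > 1 / (1 - lambda_min (norm_laplacian A))"
proof -
  let ?D = "degree_mat A"
  define p where "p = (\<chi> i. \<psi> i (xs $ i))"
  obtain R where bound: "\<And>y. y \<bullet> (A *v y) \<le> R * (y \<bullet> (?D *v y))"
    and lam: "lambda_min (norm_laplacian A) \<le> 1 - R"
    using lambda_min_norm_laplacian_le[OF sym deg_pos] by blast
  have "\<psi> i differentiable (at s)" for i s
    using smooth[of i] unfolding smooth_fun_def by (metis funpow_0)
  then have sq_lt: "s \<noteq> 0 \<Longrightarrow> (\<psi> i s)\<^sup>2 < s * \<psi> i s" for i s
    using odd_increasing_concave_sq_lt[OF A1 _ A2 A4(2)] by blast
  have psi0: "\<psi> i 0 = 0" for i using A1[of i 0] by simp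
  have Dx: "?D *v xs = \<pi> *\<^sub>R (A *v p)"
    using euler_step_fixed_point[OF equil[folded p_def]] eps by simp
  have "p \<bullet> (?D *v p) < p \<bullet> (?D *v xs)"
    unfolding p_def using deg_pos sq_lt psi0 nz by (rule degree_form_image_lt)
  also have "\<dots> = \<pi> * (p \<bullet> (A *v p))" using Dx by simp
  also have "\<dots> \<le> \<pi> * (R * (p \<bullet> (?D *v p)))" using bound pi by (simp add: mult_left_mono)
  finally have lt: "1 * (p \<bullet> (?D *v p)) < (\<pi> * R) * (p \<bullet> (?D *v p))" by simp
  moreover have "0 < p \<bullet> (?D *v p)"
    using lt degree_mat_form_pos[OF deg_pos, of p] by (cases "p = 0") auto
  ultimately have "1 < \<pi> * R" by (simp only: mult_less_cancel_right_pos)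
  then show ?thesis using pi lam by (rule one_div_lt_of_one_lt_mult)
qed

end
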